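(* Let $\Omega\subset\mathbb{R}^n$ be a domain, $-\infty<a<b<\infty$, and $p:\Omega\times[a,b]\to\mathbb{R}$ such that $p(\cdot,t)\in C^1(\Omega)$ for every $t\in[a,b]$ and $\nabla p$ is continuous on $\Omega\times[a,b]$. Let $U\subset\Omega$ be a subdomain with $|U|<\infty$ and $1<q<\infty$ such that $(p-p_U)|_U\in L^\infty(a,b;L^q(U))$, where $p_U(t)=|U|^{-1}\int_Up(x,t)\,dx$. Then $(x,t)\mapsto p(x,t)-p_U(t)$ is continuous on $\Omega\times[a,b]$.
   Context: A domain is an open connected subset of $\mathbb{R}^n$; $\nabla p$ denotes the spatial gradient; $|U|$ the Lebesgue measure of $U$. *)

theory Defs
  imports "HOL-Analysis.Analysis"
begin

definition domain :: "'a::euclidean_space set \<Rightarrow> bool" where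
  "domain \<Omega> \<longleftrightarrow> open \<Omega> \<and> connected \<Omega> \<and> \<Omega> \<noteq> {}"

definition mean_over :: "'a::euclidean_space set \<Rightarrow> ('a \<Rightarrow> real) \<Rightarrow> real" where
  "mean_over U g = (\<integral>x\<in>U. g x \<partial>lebesgue) / measure lebesgue U"

definition Lq_on :: "real \<Rightarrow> 'a::euclidean_space set \<Rightarrow> ('a \<Rightarrow> real) \<Rightarrow> bool" where
  "Lq_on q U g \<longleftrightarrow> g \<in> borel_measurable (lebesgue_on U)
      \<and> integrable (lebesgue_on U) (\<lambda>x. \<bar>g x\<bar> powr q)"

definition simple_Lq_valued ::
  "real \<Rightarrow> real \<Rightarrow> 'a::euclidean_space set \<Rightarrow> real \<Rightarrow> (real \<Rightarrow> 'a \<Rightarrow> real) \<Rightarrow> bool" where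
  "simple_Lq_valued a b U q s \<longleftrightarrow>
     (\<exists>I::nat set. \<exists>A g. finite I \<and>
        (\<forall>i\<in>I. A i \<in> sets lebesgue \<and> A i \<subseteq> {a..b} \<and> Lq_on q U (g i)) \<and>
        (\<forall>t x. s t x = (\<Sum>i\<in>I. indicator (A i) t * g i x)))"

text \<open>Bochner space L^\<infinity>(a,b;L^q(U)): strongly measurable (a.e. limit of simple
  functions in L^q(U)-norm), values a.e. in L^q(U), essentially bounded norm.\<close>
definition Linf_Lq ::
  "real \<Rightarrow> real \<Rightarrow> 'a::euclidean_space set \<Rightarrow> real \<Rightarrow> (real \<Rightarrow> 'a \<Rightarrow> real) \<Rightarrow> bool" where
  "Linf_Lq a b U q f \<longleftrightarrow>
     (AE t in lebesgue_on {a..b}. Lq_on q U (f t)) \<and>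
     (\<exists>s. (\<forall>k. simple_Lq_valued a b U q (s k)) \<and>
        (AE t in lebesgue_on {a..b}.
           (\<lambda>k. \<integral>x. \<bar>s k t x - f t x\<bar> powr q \<partial>lebesgue_on U) \<longlonglongrightarrow> 0)) \<and>
     (\<exists>C. AE t in lebesgue_on {a..b}. (\<integral>x. \<bar>f t x\<bar> powr q \<partial>lebesgue_on U) \<le> C)"

end

theory Submission
  imports Defs
begin

text \<open>Fix \<open>x\<^sub>0 \<in> U\<close>. The function \<open>D(x,t) = p(x,t) - p(x\<^sub>0,t)\<close> is jointly continuous:
  near any point the continuous gradient makes \<open>D(\<cdot>,t)\<close> Lipschitz uniformly in \<open>t\<close>, and
  \<open>t \<mapsto> D(y,t)\<close> is continuous because, by the mean value theorem applied to
  \<open>p(\<cdot>,t') - p(\<cdot>,t)\<close>, this holds for \<open>y\<close> in a ball around any base point, and connectedness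
  of \<open>\<Omega>\<close> propagates it. Since \<open>p - p\<^sub>U = D - D\<^sub>U\<close>, it remains to show that \<open>c(t) = D\<^sub>U(t)\<close>
  is continuous. Given \<open>t\<close> and \<open>\<epsilon>\<close>, take a compact \<open>K \<subseteq> U\<close> carrying almost all of \<open>U\<close>
  and of \<open>\<integral>|D(\<cdot>,t) - c(t)|\<close>. On \<open>K\<close>, \<open>D(\<cdot>,s)\<close> is uniformly close to \<open>D(\<cdot>,t)\<close> for \<open>s\<close>
  near \<open>t\<close>; on \<open>U - K\<close>, the contribution of \<open>D(\<cdot>,s) - c(s)\<close> is controlled by the uniform
  \<open>L\<^sup>q\<close> bound through \<open>y \<le> \<lambda> + y\<^sup>q \<lambda>\<^sup>1\<^sup>-\<^sup>q\<close>. Hence \<open>|c(s) - c(t)| \<le> \<epsilon>\<close> for almost every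
  \<open>s\<close> near \<open>t\<close>, and such \<open>s\<close> are dense.\<close>

lemma differentiable_bound_inner:
  fixes g :: "'a::euclidean_space \<Rightarrow> real"
  assumes "convex S"
    and "\<And>z. z \<in> S \<Longrightarrow> (g has_derivative (\<lambda>h. G z \<bullet> h)) (at z)"
    and "\<And>z. z \<in> S \<Longrightarrow> norm (G z) \<le> B"
    and "x \<in> S" "y \<in> S"
  shows "\<bar>g x - g y\<bar> \<le> B * norm (x - y)"
proof -
  have "norm (g x - g y) \<le> B * norm (x - y)"
  proof (rule differentiable_bound[OF \<open>convex S\<close> _ _ \<open>x \<in> S\<close> \<open>y \<in> S\<close>])
    fix z assume z: "z \<in> S"
    show "(g has_derivative (\<lambda>h. G z \<bullet> h)) (at z within S)"
      using assms(2)[OF z] by (rule has_derivative_at_withinI)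
    show "onorm (\<lambda>h. G z \<bullet> h) \<le> B"
    proof (rule onorm_le)
      fix h show "norm (G z \<bullet> h) \<le> B * norm h"
        using Cauchy_Schwarz_ineq2[of "G z" h] assms(3)[OF z]
        by (simp add: mult_right_mono order_trans)
    qed
  qed
  then show ?thesis by simp
qed

lemma compact_uniform_continuity_in_parameter:
  fixes f :: "'a::metric_space \<Rightarrow> 'b::metric_space \<Rightarrow> 'c::metric_space"
  assumes "compact K" "compact T" "continuous_on (K \<times> T) (\<lambda>(x, t). f x t)" "e > 0"
  obtains d where "d > 0"
    "\<And>x s t. x \<in> K \<Longrightarrow> s \<in> T \<Longrightarrow> t \<in> T \<Longrightarrow> dist s t < d \<Longrightarrow> dist (f x s) (f x t) < e"
proof -
  have "uniformly_continuous_on (K \<times> T) (\<lambda>(x, t). f x t)"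
    using assms by (intro compact_uniformly_continuous) (auto simp: compact_Times)
  then obtain d where "d > 0" and d: "\<And>u v. u \<in> K \<times> T \<Longrightarrow> v \<in> K \<times> T \<Longrightarrow> dist v u < d
      \<Longrightarrow> dist ((\<lambda>(x, t). f x t) v) ((\<lambda>(x, t). f x t) u) < e"
    using \<open>e > 0\<close> unfolding uniformly_continuous_on_def by metis
  show ?thesis
  proof (rule that[OF \<open>d > 0\<close>])
    fix x s t assume "x \<in> K" "s \<in> T" "t \<in> T" "dist s t < d"
    then show "dist (f x s) (f x t) < e"
      using d[of "(x, t)" "(x, s)"] by (simp add: dist_Pair_Pair)
  qed
qed

lemma le_add_powr_mult_powr:
  fixes y l q :: real
  assumes "y \<ge> 0" "l > 0" "q > 1"
  shows "y \<le> l + y powr q * l powr (1 - q)"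
proof (cases "y \<le> l")
  case True
  then show ?thesis by (simp add: add_increasing2)
next
  case False
  then have "y = y powr q * y powr (1 - q)"
    using assms by (simp add: powr_add[symmetric])
  also have "\<dots> \<le> y powr q * l powr (1 - q)"
    using False assms by (intro mult_left_mono powr_mono2') auto
  finally show ?thesis using assms by simp
qed

lemma exists_pos_mult_powr_less:
  fixes C q \<delta> :: real
  assumes "q > 1" "\<delta> > 0"
  shows "\<exists>l>0. C * l powr (1 - q) < \<delta>"
proof -
  have "((\<lambda>l. C * l powr (1 - q)) \<longlongrightarrow> 0) at_top"
    using \<open>q > 1\<close> by (intro tendsto_mult_right_zero tendsto_neg_powr filterlim_ident) auto
  then have "eventually (\<lambda>l. l > 0 \<and> C * l powr (1 - q) < \<delta>) at_top"
    using \<open>\<delta> > 0\<close> by (intro eventually_conj eventually_gt_at_top order_tendstoD(2))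
  then show ?thesis
    by (auto simp: eventually_at_top_linorder)
qed

lemma continuous_on_if_close_on_dense:
  fixes c :: "'a::metric_space \<Rightarrow> 'b::metric_space"
  assumes dense: "S \<subseteq> closure G"
    and close: "\<And>t e. t \<in> S \<Longrightarrow> e > 0 \<Longrightarrow> \<exists>d>0. \<forall>s\<in>G. dist s t < d \<longrightarrow> dist (c s) (c t) \<le> e"
  shows "continuous_on S c"
  unfolding continuous_on_iff
proof (intro ballI allI impI)
  fix t e assume t: "t \<in> S" and "(e::real) > 0"
  obtain d where "d > 0" and d: "\<And>s. s \<in> G \<Longrightarrow> dist s t < d \<Longrightarrow> dist (c s) (c t) \<le> e / 3"
    using close[OF t, of "e / 3"] \<open>e > 0\<close> by auto
  show "\<exists>d>0. \<forall>t'\<in>S. dist t' t < d \<longrightarrow> dist (c t') (c t) < e"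
  proof (intro exI[of _ "d / 2"] conjI ballI impI)
    fix t' assume t': "t' \<in> S" and "dist t' t < d / 2"
    obtain d' where "d' > 0" and d': "\<And>s. s \<in> G \<Longrightarrow> dist s t' < d' \<Longrightarrow> dist (c s) (c t') \<le> e / 3"
      using close[OF t', of "e / 3"] \<open>e > 0\<close> by auto
    have "t' \<in> closure G" and "min (d / 2) d' > 0"
      using dense t' \<open>d > 0\<close> \<open>d' > 0\<close> by auto
    then obtain s where "s \<in> G" and s: "dist s t' < min (d / 2) d'"
      unfolding closure_approachable by blast
    have "dist s t < d"
      using s \<open>dist t' t < d / 2\<close> dist_triangle[of s t t'] by linarith
    then show "dist (c t') (c t) < e"
      using d d' \<open>s \<in> G\<close> s dist_triangle3[of "c t'" "c t" "c s"] \<open>e > 0\<close> by fastforce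
  qed (use \<open>d > 0\<close> in simp)
qed

locale spatially_C1 =
  fixes \<Omega> :: "'a::euclidean_space set" and a b :: real
    and p :: "'a \<Rightarrow> real \<Rightarrow> real" and Dp :: "'a \<Rightarrow> real \<Rightarrow> 'a"
  assumes open_domain: "open \<Omega>"
    and has_gradient:
      "\<And>x t. t \<in> {a..b} \<Longrightarrow> x \<in> \<Omega> \<Longrightarrow> ((\<lambda>y. p y t) has_derivative (\<lambda>h. Dp x t \<bullet> h)) (at x)"
    and continuous_gradient: "continuous_on (\<Omega> \<times> {a..b}) (\<lambda>(x, t). Dp x t)"
begin

lemma continuous_on_difference_in_cball:
  assumes sub: "cball x r \<subseteq> \<Omega>" and y: "y \<in> cball x r"
  shows "continuous_on {a..b} (\<lambda>t. p y t - p x t)"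
  unfolding continuous_on_iff
proof (intro ballI allI impI)
  fix t e :: real assume t: "t \<in> {a..b}" and "e > 0"
  have "r \<ge> 0" using y by (metis mem_cball order.trans zero_le_dist)
  then have "e / (r + 1) > 0" using \<open>e > 0\<close> by simp
  moreover have "continuous_on (cball x r \<times> {a..b}) (\<lambda>(x, t). Dp x t)"
    using continuous_gradient by (rule continuous_on_subset) (use sub in auto)
  ultimately obtain d where "d > 0" and d: "\<And>z s t. z \<in> cball x r \<Longrightarrow> s \<in> {a..b} \<Longrightarrow>
      t \<in> {a..b} \<Longrightarrow> dist s t < d \<Longrightarrow> dist (Dp z s) (Dp z t) < e / (r + 1)"
    by (metis compact_uniform_continuity_in_parameter compact_cball compact_Icc)
  show "\<exists>d>0. \<forall>t'\<in>{a..b}. dist t' t < d \<longrightarrow> dist (p y t' - p x t') (p y t - p x t) < e"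
  proof (intro exI[of _ d] conjI ballI impI \<open>d > 0\<close>)
    fix t' assume t': "t' \<in> {a..b}" and "dist t' t < d"
    have "\<bar>(p y t' - p y t) - (p x t' - p x t)\<bar> \<le> e / (r + 1) * norm (y - x)"
    proof (rule differentiable_bound_inner[where G = "\<lambda>z. Dp z t' - Dp z t"])
      fix z assume z: "z \<in> cball x r"
      show "((\<lambda>z. p z t' - p z t) has_derivative (\<lambda>h. (Dp z t' - Dp z t) \<bullet> h)) (at z)"
        using has_derivative_diff[OF has_gradient[OF t'] has_gradient[OF t]] z sub
        by (auto simp: inner_diff_left)
      show "norm (Dp z t' - Dp z t) \<le> e / (r + 1)"
        using d[OF z t' t \<open>dist t' t < d\<close>] by (simp add: dist_norm)
    qed (use y \<open>r \<ge> 0\<close> in auto)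
    also have "\<dots> \<le> e / (r + 1) * r"
      using y \<open>e / (r + 1) > 0\<close>
      by (intro mult_left_mono) (simp_all add: dist_norm norm_minus_commute)
    also have "\<dots> < e"
      using \<open>e > 0\<close> \<open>r \<ge> 0\<close> by (simp add: field_simps)
    finally show "dist (p y t' - p x t') (p y t - p x t) < e"
      by (simp add: dist_real_def algebra_simps)
  qed
qed

lemma continuous_on_difference:
  assumes "connected \<Omega>" "x \<in> \<Omega>" "y \<in> \<Omega>"
  shows "continuous_on {a..b} (\<lambda>t. p y t - p x t)"
proof (rule connected_equivalence_relation[OF assms,
      where R = "\<lambda>x y. continuous_on {a..b} (\<lambda>t. p y t - p x t)"])
  fix x y assume "continuous_on {a..b} (\<lambda>t. p y t - p x t)"
  then have "continuous_on {a..b} (\<lambda>t. - (p y t - p x t))" by (rule continuous_on_minus)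
  then show "continuous_on {a..b} (\<lambda>t. p x t - p y t)" by simp
next
  fix x y z
  assume "continuous_on {a..b} (\<lambda>t. p y t - p x t)" "continuous_on {a..b} (\<lambda>t. p z t - p y t)"
  then have "continuous_on {a..b} (\<lambda>t. (p z t - p y t) + (p y t - p x t))"
    by (intro continuous_on_add)
  then show "continuous_on {a..b} (\<lambda>t. p z t - p x t)" by simp
next
  fix c assume "c \<in> \<Omega>"
  then obtain r where "r > 0" "cball c r \<subseteq> \<Omega>" using open_domain open_contains_cball by blast
  moreover have "openin (top_of_set \<Omega>) (ball c r)"
    using \<open>cball c r \<subseteq> \<Omega>\<close> by (intro open_subset) auto
  moreover have "\<forall>x\<in>ball c r. continuous_on {a..b} (\<lambda>t. p x t - p c t)"
    using continuous_on_difference_in_cball[OF \<open>cball c r \<subseteq> \<Omega>\<close>] by simp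
  ultimately show "\<exists>T. openin (top_of_set \<Omega>) T \<and> c \<in> T \<and> (\<forall>x\<in>T. continuous_on {a..b} (\<lambda>t. p x t - p c t))"
    using \<open>r > 0\<close> by (metis centre_in_ball)
qed

lemma locally_uniformly_lipschitz:
  assumes "y \<in> \<Omega>"
  obtains r B where "r > 0"
    "\<And>x t. x \<in> cball y r \<Longrightarrow> t \<in> {a..b} \<Longrightarrow> \<bar>p x t - p y t\<bar> \<le> B * dist x y"
proof -
  obtain r where "r > 0" and sub: "cball y r \<subseteq> \<Omega>"
    using open_domain assms open_contains_cball by blast
  have "compact ((\<lambda>(x, t). Dp x t) ` (cball y r \<times> {a..b}))"
    using continuous_gradient sub
    by (intro compact_continuous_image) (auto intro: continuous_on_subset simp: compact_Times)
  then obtain B where "\<forall>w \<in> (\<lambda>(x, t). Dp x t) ` (cball y r \<times> {a..b}). norm w \<le> B"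
    by (meson bounded_iff compact_imp_bounded)
  then have B: "\<And>x t. x \<in> cball y r \<Longrightarrow> t \<in> {a..b} \<Longrightarrow> norm (Dp x t) \<le> B"
    by (metis (mono_tags) SigmaI case_prod_conv image_eqI)
  show ?thesis
  proof (rule that[OF \<open>r > 0\<close>])
    fix x t assume x: "x \<in> cball y r" and t: "t \<in> {a..b}"
    have "\<bar>p x t - p y t\<bar> \<le> B * norm (x - y)"
      by (rule differentiable_bound_inner[where S = "cball y r" and G = "\<lambda>z. Dp z t"])
        (use x t sub \<open>r > 0\<close> in \<open>auto intro!: has_gradient B\<close>)
    then show "\<bar>p x t - p y t\<bar> \<le> B * dist x y"
      by (simp add: dist_norm)
  qed
qed

lemma continuous_on_subtract_base_point:
  assumes "connected \<Omega>" "x0 \<in> \<Omega>"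
  shows "continuous_on (\<Omega> \<times> {a..b}) (\<lambda>(x, t). p x t - p x0 t)"
  unfolding continuous_on_eq_continuous_within
proof (clarify)
  fix y s assume y: "y \<in> \<Omega>" and s: "s \<in> {a..b}"
  let ?F = "at (y, s) within \<Omega> \<times> {a..b}"
  obtain r B where "r > 0"
    and lip: "\<And>x t. x \<in> cball y r \<Longrightarrow> t \<in> {a..b} \<Longrightarrow> \<bar>p x t - p y t\<bar> \<le> B * dist x y"
    using locally_uniformly_lipschitz[OF y] by blast
  have near: "((\<lambda>z. p (fst z) (snd z) - p y (snd z)) \<longlongrightarrow> 0) ?F"
  proof (rule Lim_null_comparison)
    have "eventually (\<lambda>z. z \<in> \<Omega> \<times> {a..b} \<and> dist z (y, s) < r) ?F"
      using \<open>r > 0\<close> by (auto simp: eventually_at)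
    then show "eventually (\<lambda>z. norm (p (fst z) (snd z) - p y (snd z)) \<le> B * dist (fst z) y) ?F"
    proof eventually_elim
      case (elim z)
      then have "fst z \<in> cball y r"
        using dist_fst_le[of z "(y, s)"] by (simp add: dist_commute)
      then show ?case using lip[of "fst z" "snd z"] elim by (auto simp: mem_Times_iff)
    qed
    have "((\<lambda>z. B * dist (fst z) y) \<longlongrightarrow> B * dist (fst (y, s)) y) ?F"
      by (intro tendsto_intros)
    then show "((\<lambda>z. B * dist (fst z) y) \<longlongrightarrow> 0) ?F"
      by simp
  qed
  have base: "continuous_on (\<Omega> \<times> {a..b}) (\<lambda>z. p y (snd z) - p x0 (snd z))"
    using continuous_on_difference[OF assms y]
    by (rule continuous_on_compose2[OF _ continuous_on_snd]) auto
  have "((\<lambda>z. p y (snd z) - p x0 (snd z)) \<longlongrightarrow> p y s - p x0 s) ?F"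
    using bspec[OF base[unfolded continuous_on_def], of "(y, s)"] y s by simp
  with near have "((\<lambda>z. (p (fst z) (snd z) - p y (snd z)) + (p y (snd z) - p x0 (snd z)))
      \<longlongrightarrow> 0 + (p y s - p x0 s)) ?F"
    by (rule tendsto_add)
  then show "continuous ?F (\<lambda>(x, t). p x t - p x0 t)"
    by (simp add: continuous_within case_prod_beta')
qed

end

lemma tendsto_integral_indicator_diff_incseq:
  fixes h :: "'a \<Rightarrow> real"
  assumes h: "integrable M h"
    and K: "\<And>n. K n \<in> sets M" "incseq K" "(\<Union>n. K n) = space M"
  shows "(\<lambda>n. LINT x|M. indicator (space M - K n) x * h x) \<longlonglongrightarrow> 0"
proof -
  have "(\<lambda>n. LINT x|M. indicator (space M - K n) x * h x) \<longlonglongrightarrow> (LINT x|M. 0)"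
  proof (rule integral_dominated_convergence[where w = "\<lambda>x. \<bar>h x\<bar>"])
    show "(\<lambda>x. indicator (space M - K n) x * h x) \<in> borel_measurable M" for n
      using K h by (intro borel_measurable_times borel_measurable_indicator) auto
    show "AE x in M. (\<lambda>n. indicator (space M - K n) x * h x) \<longlonglongrightarrow> 0"
    proof (rule AE_I2)
      fix x assume "x \<in> space M"
      then obtain N where "x \<in> K N" using K(3) by auto
      then have "\<forall>n\<ge>N. indicator (space M - K n) x * h x = 0"
        using \<open>incseq K\<close> by (auto simp: incseq_def indicator_def)
      then show "(\<lambda>n. indicator (space M - K n) x * h x) \<longlonglongrightarrow> 0"
        by (intro tendsto_eventually) (auto simp: eventually_sequentially)
    qed
  qed (use h in \<open>auto simp: indicator_def\<close>)
  then show ?thesis by simp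
qed

lemma compact_subset_small_remainder:
  fixes U :: "'a::euclidean_space set" and h :: "'a \<Rightarrow> real"
  assumes "open U" "U \<in> lmeasurable" "integrable (lebesgue_on U) h" "e > 0"
  obtains K where "compact K" "K \<subseteq> U" "measure lebesgue (U - K) < e"
    "(LINT x|lebesgue_on U. indicator (U - K) x * h x) < e"
proof -
  let ?M = "lebesgue_on U"
  have U_sets: "U \<in> sets lebesgue" using assms(1) by simp
  obtain K where K: "\<And>n. compact (K n)" "\<And>n. K n \<subseteq> U" "\<And>n. K n \<subseteq> interior (K (Suc n))"
    "(\<Union>n. K n) = space ?M"
    using open_Union_compact_subsets[OF assms(1)] by (metis space_restrict_space2 U_sets)
  have K_sets: "K n \<in> sets ?M" for n
    using K(1,2) U_sets by (simp add: sets_restrict_space_iff compact_imp_closed)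
  have "incseq K"
    using K(3) interior_subset by (intro incseq_SucI) blast
  have "(\<lambda>n. LINT x|?M. indicator (space ?M - K n) x * h x) \<longlonglongrightarrow> 0"
    using assms(3) K_sets \<open>incseq K\<close> K(4) by (rule tendsto_integral_indicator_diff_incseq)
  then have "eventually (\<lambda>n. (LINT x|?M. indicator (space ?M - K n) x * h x) < e) sequentially"
    using \<open>e > 0\<close> by (intro order_tendstoD(2))
  moreover have "(\<lambda>n. measure ?M (space ?M - K n)) \<longlonglongrightarrow> 0"
    using tendsto_integral_indicator_diff_incseq[of ?M "\<lambda>x. 1", OF
        finite_measure.integrable_const[OF finite_measure_lebesgue_on[OF assms(2)]] K_sets \<open>incseq K\<close> K(4)]
    by (simp add: Int_absorb2)
  then have "eventually (\<lambda>n. measure ?M (space ?M - K n) < e) sequentially"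
    using \<open>e > 0\<close> by (intro order_tendstoD(2))
  ultimately obtain N where "(LINT x|?M. indicator (space ?M - K N) x * h x) < e"
    and "measure ?M (space ?M - K N) < e"
    by (metis (no_types, lifting) eventually_conj eventually_sequentially order_refl)
  then show thesis
    using that[OF K(1,2)] U_sets by (simp add: measure_restrict_space)
qed

lemma mean_difference_bound:
  fixes f g :: "'a \<Rightarrow> real"
  assumes M: "finite_measure M" and A: "A \<in> sets M"
    and f: "integrable M f" "(LINT x|M. f x) = measure M (space M) * cf"
    and g: "integrable M g" "(LINT x|M. g x) = measure M (space M) * cg"
    and f_Lq: "integrable M (\<lambda>x. \<bar>f x - cf\<bar> powr q)" "(LINT x|M. \<bar>f x - cf\<bar> powr q) \<le> C"
    and close: "\<And>x. x \<in> space M - A \<Longrightarrow> \<bar>f x - g x\<bar> \<le> \<eta>" and "\<eta> \<ge> 0"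
    and A_small: "measure M A \<le> measure M (space M) / 2"
    and "l > 0" "q > 1"
  shows "measure M (space M) * \<bar>cf - cg\<bar> \<le> 2 * (measure M (space M) * \<eta> + measure M A * l
    + C * l powr (1 - q) + (LINT x|M. indicator A x * \<bar>g x - cg\<bar>))"
proof -
  interpret finite_measure M by (rule M)
  let ?\<mu> = "measure M (space M)" and ?d = "\<bar>cf - cg\<bar>"
  \<comment> \<open>On \<open>A\<close>, where \<open>f\<close> and \<open>g\<close> are not close, \<open>|f - g|\<close> is split through the means and
    \<open>|f - cf|\<close> is traded for \<open>|f - cf| powr q\<close> by \<open>le_add_powr_mult_powr\<close>.\<close>
  define R where "R x = \<eta> + indicator A x * (?d + l) + \<bar>f x - cf\<bar> powr q * l powr (1 - q)
    + indicator A x * \<bar>g x - cg\<bar>" for x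
  have int_A: "integrable M (\<lambda>x. indicator A x * k)" for k :: real
    using integrable_mult_indicator[OF A integrable_const[of k]] by simp
  have int_tail: "integrable M (\<lambda>x. indicator A x * \<bar>g x - cg\<bar>)"
    using integrable_mult_indicator[OF A, of "\<lambda>x. \<bar>g x - cg\<bar>"] g by simp
  have R_int: "integrable M R"
    using f_Lq(1) int_A int_tail unfolding R_def by auto
  have pointwise: "\<bar>f x - g x\<bar> \<le> R x" if "x \<in> space M" for x
  proof (cases "x \<in> A")
    case True
    have "\<bar>f x - cf\<bar> \<le> l + \<bar>f x - cf\<bar> powr q * l powr (1 - q)"
      using assms by (intro le_add_powr_mult_powr) auto
    moreover have "\<bar>f x - g x\<bar> \<le> \<bar>f x - cf\<bar> + \<bar>g x - cg\<bar> + ?d" by arith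
    ultimately show ?thesis using True \<open>\<eta> \<ge> 0\<close> by (simp add: R_def)
  next
    case False
    have "\<bar>f x - g x\<bar> \<le> \<eta> + \<bar>f x - cf\<bar> powr q * l powr (1 - q)"
      using close[of x] that False by (intro add_increasing2) auto
    then show ?thesis using False by (simp add: R_def)
  qed
  have "?\<mu> * ?d = \<bar>LINT x|M. f x - g x\<bar>"
    using f g by (simp add: abs_mult right_diff_distrib[symmetric])
  also have "\<dots> \<le> (LINT x|M. \<bar>f x - g x\<bar>)"
    using integral_norm_bound[of M "\<lambda>x. f x - g x"] by simp
  also have "\<dots> \<le> (LINT x|M. R x)"
    using f g R_int pointwise by (intro integral_mono) auto
  also have "(LINT x|M. R x) = ?\<mu> * \<eta> + measure M A * (?d + l)
      + (LINT x|M. \<bar>f x - cf\<bar> powr q) * l powr (1 - q) + (LINT x|M. indicator A x * \<bar>g x - cg\<bar>)"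
    using f_Lq int_A int_tail A unfolding R_def by (simp add: mult.commute)
  also have "\<dots> \<le> ?\<mu> * \<eta> + measure M A * (?d + l) + C * l powr (1 - q)
      + (LINT x|M. indicator A x * \<bar>g x - cg\<bar>)"
    using f_Lq(2) by (simp add: mult_right_mono)
  finally show ?thesis
    using mult_right_mono[OF A_small abs_ge_zero[of "cf - cg"]] by (simp add: distrib_left)
qed

lemma AE_lebesgue_on_interval_dense:
  fixes a b :: real
  assumes "a < b" and AE: "AE s in lebesgue_on {a..b}. P s"
  shows "{a..b} \<subseteq> closure {s \<in> {a..b}. P s}"
proof
  fix t assume t: "t \<in> {a..b}"
  obtain N where N: "{s \<in> {a..b}. \<not> P s} \<subseteq> N" "emeasure (lebesgue_on {a..b}) N = 0"
    "N \<in> sets (lebesgue_on {a..b})"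
    using AE_E[OF AE] by auto
  show "t \<in> closure {s \<in> {a..b}. P s}"
    unfolding closure_approachable
  proof (intro allI impI)
    fix e :: real assume "e > 0"
    define u v where "u = max a (t - e / 2)" and "v = min b (t + e / 2)"
    have "u < v" and uv: "{u..v} \<subseteq> {a..b}"
      using \<open>a < b\<close> t \<open>e > 0\<close> by (auto simp: u_def v_def)
    have "\<not> {u..v} \<subseteq> N"
    proof
      assume "{u..v} \<subseteq> N"
      then have "emeasure (lebesgue_on {a..b}) {u..v} \<le> 0"
        using emeasure_mono[OF _ N(3)] N(2) by metis
      moreover have "emeasure (lebesgue_on {a..b}) {u..v} = ennreal (v - u)"
        using uv \<open>u < v\<close> by (simp add: emeasure_restrict_space emeasure_lborel_Icc emeasure_completion)
      ultimately show False using \<open>u < v\<close> by simp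
    qed
    then obtain s where "s \<in> {u..v}" "s \<notin> N" by blast
    then show "\<exists>s\<in>{s \<in> {a..b}. P s}. dist s t < e"
      using N(1) uv \<open>e > 0\<close> by (intro bexI[of _ s]) (auto simp: u_def v_def dist_real_def)
  qed
qed

lemma measure_lebesgue_open_pos:
  fixes U :: "'a::euclidean_space set"
  assumes "open U" "U \<noteq> {}" "U \<in> lmeasurable"
  shows "measure lebesgue U > 0"
proof -
  obtain x r where "r > 0" "ball x r \<subseteq> U"
    using assms open_contains_ball by blast
  then have "measure lebesgue (ball x r) \<le> measure lebesgue U"
    using assms by (intro measure_mono_fmeasurable) auto
  moreover have "measure lebesgue (ball x r) > 0"
    using \<open>r > 0\<close> by (simp add: measure_completion)
  ultimately show ?thesis by linarith
qed

lemma mean_over_eq_integral: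
  fixes U :: "'a::euclidean_space set"
  assumes "U \<in> sets lebesgue"
  shows "mean_over U g = (LINT x|lebesgue_on U. g x) / measure (lebesgue_on U) (space (lebesgue_on U))"
  using assms
  by (simp add: mean_over_def set_lebesgue_integral_def integral_restrict_space measure_restrict_space)

lemma
  fixes U :: "'a::euclidean_space set"
  assumes "U \<in> lmeasurable" "measure lebesgue U > 0" "set_integrable lebesgue U g"
  shows integrable_lebesgue_on_diff_const: "integrable (lebesgue_on U) (\<lambda>x. g x - k)"
    and mean_over_diff_const: "mean_over U (\<lambda>x. g x - k) = mean_over U g - k"
proof -
  have "U \<in> sets lebesgue" using assms(1) by (rule fmeasurableD)
  moreover have "integrable (lebesgue_on U) g"
    using assms(3) \<open>U \<in> sets lebesgue\<close> by (simp add: set_integrable_def integrable_restrict_space)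
  moreover have "finite_measure (lebesgue_on U)"
    using assms(1) by (rule finite_measure_lebesgue_on)
  ultimately show "integrable (lebesgue_on U) (\<lambda>x. g x - k)"
    and "mean_over U (\<lambda>x. g x - k) = mean_over U g - k"
    using assms by (simp_all add: mean_over_eq_integral measure_restrict_space
        finite_measure.integrable_const field_simps)
qed

lemma mean_over_difference_bound:
  fixes U A :: "'a::euclidean_space set" and f g :: "'a \<Rightarrow> real"
  assumes U: "U \<in> lmeasurable" "measure lebesgue U > 0" and A: "A \<in> sets lebesgue" "A \<subseteq> U"
    and f: "integrable (lebesgue_on U) f" and g: "integrable (lebesgue_on U) g"
    and f_Lq: "integrable (lebesgue_on U) (\<lambda>x. \<bar>f x - mean_over U f\<bar> powr q)"
      "(LINT x|lebesgue_on U. \<bar>f x - mean_over U f\<bar> powr q) \<le> C"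
    and close: "\<And>x. x \<in> U - A \<Longrightarrow> \<bar>f x - g x\<bar> \<le> \<eta>" and "\<eta> \<ge> 0"
    and A_small: "measure lebesgue A \<le> measure lebesgue U / 2"
    and "l > 0" "q > 1"
  shows "measure lebesgue U * \<bar>mean_over U f - mean_over U g\<bar> \<le> 2 * (measure lebesgue U * \<eta>
    + measure lebesgue A * l + C * l powr (1 - q)
    + (LINT x|lebesgue_on U. indicator A x * \<bar>g x - mean_over U g\<bar>))"
proof -
  let ?M = "lebesgue_on U"
  have U_sets: "U \<in> sets lebesgue" using U(1) by (rule fmeasurableD)
  have measure_M: "measure ?M B = measure lebesgue B" if "B \<subseteq> U" for B
    using U_sets that by (simp add: measure_restrict_space)
  have mean: "(LINT x|?M. h x) = measure ?M (space ?M) * mean_over U h" for h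
    using mean_over_eq_integral[OF U_sets] U(2) measure_M[of U] by simp
  have "A \<in> sets ?M"
    using A U_sets by (simp add: sets_restrict_space_iff Int_absorb2)
  from mean_difference_bound[OF finite_measure_lebesgue_on[OF U(1)] this f mean g mean f_Lq _
      \<open>\<eta> \<ge> 0\<close> _ \<open>l > 0\<close> \<open>q > 1\<close>]
  show ?thesis
    using close A_small measure_M[of U] measure_M[OF A(2)] by simp
qed

lemma Linf_Lq_AE_bounded:
  assumes "Linf_Lq a b U q f"
  obtains C where "AE t in lebesgue_on {a..b}. t \<in> {a..b} \<and>
    integrable (lebesgue_on U) (\<lambda>x. \<bar>f t x\<bar> powr q) \<and> (LINT x|lebesgue_on U. \<bar>f t x\<bar> powr q) \<le> C"
proof -
  obtain C where "AE t in lebesgue_on {a..b}. Lq_on q U (f t)"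
    and "AE t in lebesgue_on {a..b}. (LINT x|lebesgue_on U. \<bar>f t x\<bar> powr q) \<le> C"
    using assms unfolding Linf_Lq_def by blast
  moreover have "AE t in lebesgue_on {a..b}. t \<in> {a..b}"
    by (rule AE_I2) simp
  ultimately have "AE t in lebesgue_on {a..b}. t \<in> {a..b} \<and>
    integrable (lebesgue_on U) (\<lambda>x. \<bar>f t x\<bar> powr q) \<and> (LINT x|lebesgue_on U. \<bar>f t x\<bar> powr q) \<le> C"
    by eventually_elim (simp add: Lq_on_def)
  then show thesis by (rule that)
qed

lemma mean_over_close:
  fixes U :: "'a::euclidean_space set" and T :: "'b::metric_space set"
    and D :: "'a \<Rightarrow> 'b \<Rightarrow> real"
  assumes U: "open U" "U \<noteq> {}" "U \<in> lmeasurable" and "q > 1"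
    and "compact T" and D_cont: "continuous_on (U \<times> T) (\<lambda>(x, t). D x t)"
    and D_int: "\<And>t. t \<in> T \<Longrightarrow> integrable (lebesgue_on U) (\<lambda>x. D x t)"
    and t: "t \<in> T" and "e > 0"
  obtains d where "d > 0" "\<And>s. s \<in> T \<Longrightarrow> dist s t < d \<Longrightarrow>
      integrable (lebesgue_on U) (\<lambda>x. \<bar>D x s - mean_over U (\<lambda>y. D y s)\<bar> powr q) \<Longrightarrow>
      (LINT x|lebesgue_on U. \<bar>D x s - mean_over U (\<lambda>y. D y s)\<bar> powr q) \<le> C \<Longrightarrow>
      \<bar>mean_over U (\<lambda>y. D y s) - mean_over U (\<lambda>y. D y t)\<bar> \<le> e"
proof -
  define c where "c s = mean_over U (\<lambda>y. D y s)" for s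
  define \<mu> where "\<mu> = measure lebesgue U"
  have "\<mu> > 0"
    unfolding \<mu>_def using U by (rule measure_lebesgue_open_pos)
  obtain l where "l > 0" and l: "C * l powr (1 - q) < e * \<mu> / 8"
    using exists_pos_mult_powr_less[OF \<open>q > 1\<close>] \<open>e > 0\<close> \<open>\<mu> > 0\<close>
    by (metis divide_pos_pos mult_pos_pos zero_less_numeral)
  define \<epsilon> where "\<epsilon> = min (e * \<mu> / 8) (min (\<mu> / 2) (e * \<mu> / (8 * l)))"
  have "\<epsilon> > 0"
    using \<open>e > 0\<close> \<open>\<mu> > 0\<close> \<open>l > 0\<close> by (simp add: \<epsilon>_def)
  have "integrable (lebesgue_on U) (\<lambda>x. \<bar>D x t - c t\<bar>)"
    using D_int[OF t] finite_measure_lebesgue_on[OF U(3)] by (auto simp: finite_measure.integrable_const)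
  then obtain K where K: "compact K" "K \<subseteq> U" and small: "measure lebesgue (U - K) < \<epsilon>"
    and tail: "(LINT x|lebesgue_on U. indicator (U - K) x * \<bar>D x t - c t\<bar>) < \<epsilon>"
    using compact_subset_small_remainder[OF U(1,3) _ \<open>\<epsilon> > 0\<close>] by blast
  have "continuous_on (K \<times> T) (\<lambda>(x, t). D x t)"
    using D_cont by (rule continuous_on_subset) (use K(2) in auto)
  then obtain d where "d > 0" and d: "\<And>x s t. x \<in> K \<Longrightarrow> s \<in> T \<Longrightarrow> t \<in> T \<Longrightarrow> dist s t < d
      \<Longrightarrow> dist (D x s) (D x t) < e / 8"
    using compact_uniform_continuity_in_parameter[OF K(1) \<open>compact T\<close>] \<open>e > 0\<close>
    by (metis zero_less_divide_iff zero_less_numeral)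
  show thesis
  proof (rule that[OF \<open>d > 0\<close>])
    fix s assume s: "s \<in> T" "dist s t < d"
      and Lq: "integrable (lebesgue_on U) (\<lambda>x. \<bar>D x s - mean_over U (\<lambda>y. D y s)\<bar> powr q)"
        "(LINT x|lebesgue_on U. \<bar>D x s - mean_over U (\<lambda>y. D y s)\<bar> powr q) \<le> C"
    have close: "\<And>x. x \<in> U - (U - K) \<Longrightarrow> \<bar>D x s - D x t\<bar> \<le> e / 8"
      using d[OF _ s(1) t s(2)] by (auto simp: dist_real_def less_imp_le)
    have "U - K \<in> sets lebesgue"
      using K U(1) by (simp add: compact_imp_closed sets.Diff)
    from mean_over_difference_bound[OF U(3) \<open>\<mu> > 0\<close>[unfolded \<mu>_def] this Diff_subset
        D_int[OF s(1)] D_int[OF t] Lq close]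
    have "\<mu> * \<bar>c s - c t\<bar> \<le> 2 * (e * \<mu> / 8 + measure lebesgue (U - K) * l + C * l powr (1 - q)
        + (LINT x|lebesgue_on U. indicator (U - K) x * \<bar>D x t - c t\<bar>))"
      using small \<open>e > 0\<close> \<open>l > 0\<close> \<open>q > 1\<close> by (simp add: c_def \<mu>_def \<epsilon>_def)
    moreover have "measure lebesgue (U - K) * l \<le> e * \<mu> / 8"
      using small \<open>l > 0\<close> by (simp add: \<epsilon>_def field_simps)
    moreover have "(LINT x|lebesgue_on U. indicator (U - K) x * \<bar>D x t - c t\<bar>) < e * \<mu> / 8"
      using tail by (simp add: \<epsilon>_def)
    ultimately have "\<mu> * \<bar>c s - c t\<bar> \<le> e * \<mu>"
      using l by argo
    then show "\<bar>mean_over U (\<lambda>y. D y s) - mean_over U (\<lambda>y. D y t)\<bar> \<le> e"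
      using \<open>\<mu> > 0\<close> by (simp add: c_def mult.commute[of e])
  qed
qed

lemma continuous_on_subtract_mean_over:
  fixes U S :: "'a::euclidean_space set" and D :: "'a \<Rightarrow> real \<Rightarrow> real"
  assumes U: "open U" "U \<noteq> {}" "U \<in> lmeasurable" and "U \<subseteq> S" and "q > 1" "a < b"
    and D_cont: "continuous_on (S \<times> {a..b}) (\<lambda>(x, t). D x t)"
    and D_int: "\<And>t. t \<in> {a..b} \<Longrightarrow> integrable (lebesgue_on U) (\<lambda>x. D x t)"
    and Lq: "AE t in lebesgue_on {a..b}.
      integrable (lebesgue_on U) (\<lambda>x. \<bar>D x t - mean_over U (\<lambda>y. D y t)\<bar> powr q) \<and>
      (LINT x|lebesgue_on U. \<bar>D x t - mean_over U (\<lambda>y. D y t)\<bar> powr q) \<le> C"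
  shows "continuous_on (S \<times> {a..b}) (\<lambda>(x, t). D x t - mean_over U (\<lambda>y. D y t))"
proof -
  have D_cont_U: "continuous_on (U \<times> {a..b}) (\<lambda>(x, t). D x t)"
    using D_cont by (rule continuous_on_subset) (use \<open>U \<subseteq> S\<close> in auto)
  have "continuous_on {a..b} (\<lambda>t. mean_over U (\<lambda>y. D y t))"
  proof (rule continuous_on_if_close_on_dense[OF AE_lebesgue_on_interval_dense[OF \<open>a < b\<close> Lq]])
    fix t e :: real assume "t \<in> {a..b}" "e > 0"
    then obtain d where "d > 0" and d: "\<And>s. s \<in> {a..b} \<Longrightarrow> dist s t < d \<Longrightarrow>
        integrable (lebesgue_on U) (\<lambda>x. \<bar>D x s - mean_over U (\<lambda>y. D y s)\<bar> powr q) \<Longrightarrow>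
        (LINT x|lebesgue_on U. \<bar>D x s - mean_over U (\<lambda>y. D y s)\<bar> powr q) \<le> C \<Longrightarrow>
        \<bar>mean_over U (\<lambda>y. D y s) - mean_over U (\<lambda>y. D y t)\<bar> \<le> e"
      using mean_over_close[OF U \<open>q > 1\<close> compact_Icc D_cont_U D_int] by metis
    then show "\<exists>d>0. \<forall>s\<in>{s \<in> {a..b}.
        integrable (lebesgue_on U) (\<lambda>x. \<bar>D x s - mean_over U (\<lambda>y. D y s)\<bar> powr q) \<and>
        (LINT x|lebesgue_on U. \<bar>D x s - mean_over U (\<lambda>y. D y s)\<bar> powr q) \<le> C}.
        dist s t < d \<longrightarrow> dist (mean_over U (\<lambda>y. D y s)) (mean_over U (\<lambda>y. D y t)) \<le> e"
      by (auto simp: dist_real_def)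
  qed
  then have "continuous_on (S \<times> {a..b}) (\<lambda>z. mean_over U (\<lambda>y. D y (snd z)))"
    by (rule continuous_on_compose2[OF _ continuous_on_snd]) auto
  then have "continuous_on (S \<times> {a..b}) (\<lambda>z. (\<lambda>(x, t). D x t) z - mean_over U (\<lambda>y. D y (snd z)))"
    by (rule continuous_on_diff[OF D_cont])
  then show ?thesis
    by (simp add: case_prod_beta')
qed

theorem lemmaB2:
  fixes \<Omega> U :: "'a::euclidean_space set"
    and p :: "'a \<Rightarrow> real \<Rightarrow> real"
    and Dp :: "'a \<Rightarrow> real \<Rightarrow> 'a"
    and a b q :: real
  assumes "domain \<Omega>"
    and "a < b"
    and "\<forall>t\<in>{a..b}. \<forall>x\<in>\<Omega>. ((\<lambda>y. p y t) has_derivative (\<lambda>h. Dp x t \<bullet> h)) (at x)"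
    and "continuous_on (\<Omega> \<times> {a..b}) (\<lambda>(x, t). Dp x t)"
    and "domain U" and "U \<subseteq> \<Omega>"
    and "emeasure lebesgue U < \<infinity>"
    and "1 < q"
    and "\<forall>t\<in>{a..b}. set_integrable lebesgue U (\<lambda>x. p x t)"
    and "Linf_Lq a b U q (\<lambda>t x. p x t - mean_over U (\<lambda>y. p y t))"
  shows "continuous_on (\<Omega> \<times> {a..b}) (\<lambda>(x, t). p x t - mean_over U (\<lambda>y. p y t))"
proof -
  interpret spatially_C1 \<Omega> a b p Dp
    using assms(1,3,4) by unfold_locales (auto simp: domain_def)
  have U: "open U" "U \<noteq> {}" "U \<in> lmeasurable"
    using \<open>domain U\<close> assms(7) by (auto simp: domain_def fmeasurable_def)
  then obtain x0 where "x0 \<in> U" by blast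
  define D where "D x t = p x t - p x0 t" for x t
  have "measure lebesgue U > 0"
    using measure_lebesgue_open_pos[OF U] .
  note mean_facts = integrable_lebesgue_on_diff_const[OF U(3) this] mean_over_diff_const[OF U(3) this]
  have D_int: "integrable (lebesgue_on U) (\<lambda>x. D x t)"
    and normalized: "p x t - mean_over U (\<lambda>y. p y t) = D x t - mean_over U (\<lambda>y. D y t)"
    if "t \<in> {a..b}" for x t
    using mean_facts assms(9) that by (simp_all add: D_def)
  obtain C where "AE t in lebesgue_on {a..b}. t \<in> {a..b} \<and>
      integrable (lebesgue_on U) (\<lambda>x. \<bar>p x t - mean_over U (\<lambda>y. p y t)\<bar> powr q) \<and>
      (LINT x|lebesgue_on U. \<bar>p x t - mean_over U (\<lambda>y. p y t)\<bar> powr q) \<le> C"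
    using Linf_Lq_AE_bounded[OF assms(10)] by blast
  then have "AE t in lebesgue_on {a..b}.
      integrable (lebesgue_on U) (\<lambda>x. \<bar>D x t - mean_over U (\<lambda>y. D y t)\<bar> powr q) \<and>
      (LINT x|lebesgue_on U. \<bar>D x t - mean_over U (\<lambda>y. D y t)\<bar> powr q) \<le> C"
    by eventually_elim (auto simp: normalized)
  moreover have "continuous_on (\<Omega> \<times> {a..b}) (\<lambda>(x, t). D x t)"
    unfolding D_def using assms(1,6) \<open>x0 \<in> U\<close>
    by (intro continuous_on_subtract_base_point) (auto simp: domain_def)
  ultimately have "continuous_on (\<Omega> \<times> {a..b}) (\<lambda>(x, t). D x t - mean_over U (\<lambda>y. D y t))"
    using continuous_on_subtract_mean_over[OF U assms(6,8,2)] D_int by blast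
  then show ?thesis
    by (rule continuous_on_cong[THEN iffD1, rotated 2]) (auto simp: normalized)
qed

end
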